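(* Let $\mathcal{G}$ be a graph of groups over $Y$ and let $w=g_0y_1g_1\cdots y_ng_n$ be a Britton-reduced $\mathcal{G}$-factorization with $n\ge1$. Suppose $$y_{\lfloor n/2+1\rfloor}g_{\lfloor n/2+1\rfloor}\cdots y_ng_n\,g_0\,y_1g_1\cdots y_{\lfloor n/2\rfloor}g_{\lfloor n/2\rfloor}$$ rewrites by finitely many Britton reductions to a Britton-reduced word $\hat w$. Then $\hat w$ is cyclically Britton-reduced and $w$ and $\hat w$ are conjugate in $F(\mathcal{G})$.
   Context: A graph $Y$ (Serre) has vertices $V(Y)$, edges $E(Y)$, maps $\iota,\tau$ and a fixed-point-free involution $y\mapsto\bar y$ with $\iota(\bar y)=\tau(y)$. A graph of groups $\mathcal{G}$ assigns groups $G_a$ ($a\in V(Y)$), $G_y=G_{\bar y}$ ($y\in E(Y)$) and injective homomorphisms $G_y\to G_{\iota(y)}$, $c\mapsto c^y$. With $\Delta=E(Y)\cup\bigcup_a(G_a\setminus\{1\})$, $F(\mathcal{G})$ is $\Delta^*$ modulo $gh=[gh]$ ($g,h\in G_a$, product in $G_a$, $1$ = empty word), $\bar yy=1$ and $y\,c^{\bar y}\bar y=c^y$ ($c\in G_y$). A $\mathcal{G}$-factorization is a word $g_0y_1g_1\cdots y_ng_n$ with $\tau(y_i)=\iota(y_{i+1})$, $\tau(y_n)=\iota(y_1)$, $g_0\in G_{\iota(y_1)}$, $g_i\in G_{\tau(y_i)}$ (trivial $g_i$ omitted). Britton reductions are the rewriting rules $gh\to[gh]$ ($g,h\in G_a\setminus\{1\}$)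 and $y\,c^{\bar y}\,\bar y\to c^y$ ($y\in E(Y)$, $c\in G_y$). A word is Britton-reduced if no rule applies, and cyclically Britton-reduced if every cyclic permutation $u'u$ of it (where the word is $uu'$) is Britton-reduced. *)

theory Defs
  imports "HOL-Algebra.Group"
begin

record ('v, 'e, 'g, 'h) gog =
  verts :: "'v set"
  edges :: "'e set"
  src   :: "'e \<Rightarrow> 'v"
  tgt   :: "'e \<Rightarrow> 'v"
  rev   :: "'e \<Rightarrow> 'e"
  vgrp  :: "'v \<Rightarrow> 'g monoid"
  egrp  :: "'e \<Rightarrow> 'h monoid"
  emb   :: "'e \<Rightarrow> 'h \<Rightarrow> 'g"

definition graph_of_groups :: "('v, 'e, 'g, 'h) gog \<Rightarrow> bool" where
  "graph_of_groups \<Gamma> \<longleftrightarrow>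
     (\<forall>y\<in>edges \<Gamma>. rev \<Gamma> y \<in> edges \<Gamma> \<and> rev \<Gamma> (rev \<Gamma> y) = y \<and> rev \<Gamma> y \<noteq> y
        \<and> src \<Gamma> y \<in> verts \<Gamma> \<and> tgt \<Gamma> y \<in> verts \<Gamma> \<and> src \<Gamma> (rev \<Gamma> y) = tgt \<Gamma> y)
   \<and> (\<forall>a\<in>verts \<Gamma>. group (vgrp \<Gamma> a))
   \<and> (\<forall>y\<in>edges \<Gamma>. group (egrp \<Gamma> y) \<and> egrp \<Gamma> (rev \<Gamma> y) = egrp \<Gamma> y
        \<and> emb \<Gamma> y \<in> hom (egrp \<Gamma> y) (vgrp \<Gamma> (src \<Gamma> y))
        \<and> inj_on (emb \<Gamma> y) (carrier (egrp \<Gamma> y)))"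

text \<open>The alphabet Delta: edges, and nontrivial vertex-group elements tagged with their vertex.\<close>
datatype ('v, 'e, 'g) letter = Edge 'e | Elt 'v 'g

definition valid_letter :: "('v, 'e, 'g, 'h) gog \<Rightarrow> ('v, 'e, 'g) letter \<Rightarrow> bool" where
  "valid_letter \<Gamma> l = (case l of Edge y \<Rightarrow> y \<in> edges \<Gamma>
     | Elt a g \<Rightarrow> a \<in> verts \<Gamma> \<and> g \<in> carrier (vgrp \<Gamma> a) \<and> g \<noteq> \<one>\<^bsub>vgrp \<Gamma> a\<^esub>)"

definition valid_word :: "('v, 'e, 'g, 'h) gog \<Rightarrow> ('v, 'e, 'g) letter list \<Rightarrow> bool" where
  "valid_word \<Gamma> w = (\<forall>l\<in>set w. valid_letter \<Gamma> l)"

definition elt :: "('v, 'e, 'g, 'h) gog \<Rightarrow> 'v \<Rightarrow> 'g \<Rightarrow> ('v, 'e, 'g) letter list" where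
  "elt \<Gamma> a g = (if g = \<one>\<^bsub>vgrp \<Gamma> a\<^esub> then [] else [Elt a g])"

inductive fg_rel :: "('v, 'e, 'g, 'h) gog \<Rightarrow> ('v, 'e, 'g) letter list \<Rightarrow> ('v, 'e, 'g) letter list \<Rightarrow> bool"
  for \<Gamma> where
  mult: "\<lbrakk> a \<in> verts \<Gamma>; g \<in> carrier (vgrp \<Gamma> a); h \<in> carrier (vgrp \<Gamma> a) \<rbrakk>
     \<Longrightarrow> fg_rel \<Gamma> (elt \<Gamma> a g @ elt \<Gamma> a h) (elt \<Gamma> a (g \<otimes>\<^bsub>vgrp \<Gamma> a\<^esub> h))"
| inv_edge: "y \<in> edges \<Gamma> \<Longrightarrow> fg_rel \<Gamma> [Edge (rev \<Gamma> y), Edge y] []"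
| conj: "\<lbrakk> y \<in> edges \<Gamma>; c \<in> carrier (egrp \<Gamma> y) \<rbrakk>
     \<Longrightarrow> fg_rel \<Gamma> ([Edge y] @ elt \<Gamma> (tgt \<Gamma> y) (emb \<Gamma> (rev \<Gamma> y) c) @ [Edge (rev \<Gamma> y)])
                  (elt \<Gamma> (src \<Gamma> y) (emb \<Gamma> y c))"

inductive fg_eq :: "('v, 'e, 'g, 'h) gog \<Rightarrow> ('v, 'e, 'g) letter list \<Rightarrow> ('v, 'e, 'g) letter list \<Rightarrow> bool"
  for \<Gamma> where
  refl: "fg_eq \<Gamma> u u"
| sym: "fg_eq \<Gamma> u v \<Longrightarrow> fg_eq \<Gamma> v u"
| trans: "fg_eq \<Gamma> u v \<Longrightarrow> fg_eq \<Gamma> v w \<Longrightarrow> fg_eq \<Gamma> u w"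
| rel: "fg_rel \<Gamma> u v \<Longrightarrow> fg_eq \<Gamma> (p @ u @ q) (p @ v @ q)"

definition fg_conjugate :: "('v, 'e, 'g, 'h) gog \<Rightarrow> ('v, 'e, 'g) letter list \<Rightarrow> ('v, 'e, 'g) letter list \<Rightarrow> bool" where
  "fg_conjugate \<Gamma> u v \<longleftrightarrow> (\<exists>x x'. valid_word \<Gamma> x \<and> valid_word \<Gamma> x'
      \<and> fg_eq \<Gamma> (x @ x') [] \<and> fg_eq \<Gamma> (x' @ x) [] \<and> fg_eq \<Gamma> (x @ u @ x') v)"

inductive britton_step :: "('v, 'e, 'g, 'h) gog \<Rightarrow> ('v, 'e, 'g) letter list \<Rightarrow> ('v, 'e, 'g) letter list \<Rightarrow> bool"
  for \<Gamma> where
  mult: "\<lbrakk> a \<in> verts \<Gamma>; g \<in> carrier (vgrp \<Gamma> a); h \<in> carrier (vgrp \<Gamma> a);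
           g \<noteq> \<one>\<^bsub>vgrp \<Gamma> a\<^esub>; h \<noteq> \<one>\<^bsub>vgrp \<Gamma> a\<^esub> \<rbrakk>
     \<Longrightarrow> britton_step \<Gamma> (p @ [Elt a g, Elt a h] @ q) (p @ elt \<Gamma> a (g \<otimes>\<^bsub>vgrp \<Gamma> a\<^esub> h) @ q)"
| conj: "\<lbrakk> y \<in> edges \<Gamma>; c \<in> carrier (egrp \<Gamma> y) \<rbrakk>
     \<Longrightarrow> britton_step \<Gamma> (p @ [Edge y] @ elt \<Gamma> (tgt \<Gamma> y) (emb \<Gamma> (rev \<Gamma> y) c) @ [Edge (rev \<Gamma> y)] @ q)
                        (p @ elt \<Gamma> (src \<Gamma> y) (emb \<Gamma> y c) @ q)"

definition britton_reduced :: "('v, 'e, 'g, 'h) gog \<Rightarrow> ('v, 'e, 'g) letter list \<Rightarrow> bool" where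
  "britton_reduced \<Gamma> w \<longleftrightarrow> \<not> (\<exists>w'. britton_step \<Gamma> w w')"

definition cyc_britton_reduced :: "('v, 'e, 'g, 'h) gog \<Rightarrow> ('v, 'e, 'g) letter list \<Rightarrow> bool" where
  "cyc_britton_reduced \<Gamma> w \<longleftrightarrow> (\<forall>u u'. w = u @ u' \<longrightarrow> britton_reduced \<Gamma> (u' @ u))"

text \<open>g_0 y_1 g_1 ... y_n g_n, given by sequences y, g indexed by naturals.\<close>
definition is_factorization :: "('v, 'e, 'g, 'h) gog \<Rightarrow> nat \<Rightarrow> (nat \<Rightarrow> 'e) \<Rightarrow> (nat \<Rightarrow> 'g) \<Rightarrow> bool" where
  "is_factorization \<Gamma> n y g \<longleftrightarrow> 1 \<le> n
     \<and> (\<forall>i\<in>{1..n}. y i \<in> edges \<Gamma>)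
     \<and> (\<forall>i\<in>{1..<n}. tgt \<Gamma> (y i) = src \<Gamma> (y (Suc i)))
     \<and> tgt \<Gamma> (y n) = src \<Gamma> (y 1)
     \<and> g 0 \<in> carrier (vgrp \<Gamma> (src \<Gamma> (y 1)))
     \<and> (\<forall>i\<in>{1..n}. g i \<in> carrier (vgrp \<Gamma> (tgt \<Gamma> (y i))))"

definition seg_word :: "('v, 'e, 'g, 'h) gog \<Rightarrow> (nat \<Rightarrow> 'e) \<Rightarrow> (nat \<Rightarrow> 'g) \<Rightarrow> nat \<Rightarrow> nat \<Rightarrow> ('v, 'e, 'g) letter list" where
  "seg_word \<Gamma> y g i j = concat (map (\<lambda>k. Edge (y k) # elt \<Gamma> (tgt \<Gamma> (y k)) (g k)) [i..<Suc j])"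

definition fact_word :: "('v, 'e, 'g, 'h) gog \<Rightarrow> nat \<Rightarrow> (nat \<Rightarrow> 'e) \<Rightarrow> (nat \<Rightarrow> 'g) \<Rightarrow> ('v, 'e, 'g) letter list" where
  "fact_word \<Gamma> n y g = elt \<Gamma> (src \<Gamma> (y 1)) (g 0) @ seg_word \<Gamma> y g 1 n"

end

theory Submission
  imports Defs
begin

text \<open>Let m = n div 2 and split w = P Q with P = g_0 y_1 ... y_m g_m. The word being reduced
  is the rotation Q P, and Q (P Q) Q^-1 = Q P in F(G), so w is conjugate to every word that
  Q P reduces to.

  Because w is reduced, every reduction of Q P happens in the middle: each word reached has the
  form y_(m+1) ... y_(n-k) M y_(k+1) ... y_m g_m with M a word in one vertex group, and a
  reduction either multiplies two letters of M or cancels y_(n-k) M y_(k+1) to a single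
  vertex-group element. In a reduced word of this form M has at most one letter, so a redex in
  a cyclic permutation has to straddle the two ends. For k = m the word is too short to contain
  a redex; otherwise the straddling redex would be y_m g_m y_(m+1), which is a subword of w.\<close>

section \<open>Words separated by edge letters\<close>

fun is_edge :: "('v, 'e, 'g) letter \<Rightarrow> bool" where
  "is_edge (Edge _) = True"
| "is_edge (Elt _ _) = False"

definition edge_free :: "('v, 'e, 'g) letter list \<Rightarrow> bool" where
  "edge_free xs \<longleftrightarrow> (\<forall>l\<in>set xs. \<not> is_edge l)"

lemma edge_free_elt [simp]: "edge_free (elt \<Gamma> a h)"
  by (simp add: edge_free_def elt_def)

lemma edge_free_append_Edge_eq:
  assumes "e1 @ Edge a # X1 = e2 @ Edge b # X2" "edge_free e1" "edge_free e2"
  shows "e1 = e2 \<and> a = b \<and> X1 = X2"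
  using assms
proof (induction e1 arbitrary: e2)
  case Nil
  then show ?case by (cases e2) (auto simp: edge_free_def)
next
  case (Cons l e1)
  then show ?case by (cases e2) (auto simp: edge_free_def)
qed

lemma append_Edge_edge_free_eq:
  assumes "X1 @ Edge a # e1 = X2 @ Edge b # e2" "edge_free e1" "edge_free e2"
  shows "X1 = X2 \<and> a = b \<and> e1 = e2"
proof -
  have "List.rev e1 @ Edge a # List.rev X1 = List.rev e2 @ Edge b # List.rev X2"
    using arg_cong[OF assms(1), of List.rev] by simp
  moreover have "edge_free (List.rev e1)" "edge_free (List.rev e2)"
    using assms(2,3) by (simp_all add: edge_free_def)
  ultimately have "List.rev e1 = List.rev e2 \<and> a = b \<and> List.rev X1 = List.rev X2"
    by (rule edge_free_append_Edge_eq)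
  then show ?thesis by simp
qed

lemma edge_free_append_eq_Edge:
  assumes "M @ Y = e @ Edge z # q" "edge_free M" "edge_free e" "Y = [] \<or> is_edge (hd Y)"
  shows "M = e \<and> Y = Edge z # q"
proof (cases Y)
  case Nil
  with assms(1,2) show ?thesis by (auto simp: edge_free_def)
next
  case (Cons l Y')
  with assms(4) obtain z' where "l = Edge z'" by (cases l) auto
  with Cons assms(1) have "M @ Edge z' # Y' = e @ Edge z # q" by simp
  from edge_free_append_Edge_eq[OF this assms(2,3)] show ?thesis using Cons \<open>l = Edge z'\<close> by simp
qed

lemma append_eq_append_infix_cases:
  assumes "p @ pat @ q = X @ Y"
  obtains (left) q1 where "X = p @ pat @ q1" "q = q1 @ Y"
    | (right) p1 where "Y = p1 @ pat @ q" "p = X @ p1"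
    | (across) a b where "pat = a @ b" "a \<noteq> []" "b \<noteq> []" "X = p @ a" "Y = b @ q"
proof -
  from assms obtain us where
    "(p = X @ us \<and> us @ pat @ q = Y) \<or> (p @ us = X \<and> pat @ q = us @ Y)"
    by (auto simp: append_eq_append_conv2)
  then show thesis
  proof (elim disjE conjE)
    assume "p = X @ us" "us @ pat @ q = Y"
    then show thesis using right by blast
  next
    assume X: "p @ us = X" and "pat @ q = us @ Y"
    then obtain vs where "(pat = us @ vs \<and> vs @ q = Y) \<or> (pat @ vs = us \<and> q = vs @ Y)"
      by (auto simp: append_eq_append_conv2)
    then show thesis
      using X left right across by (metis append.right_neutral append_Nil)
  qed
qed

lemma two_letter_split:
  "a @ b = [x1, x2] \<Longrightarrow> a \<noteq> [] \<Longrightarrow> b \<noteq> [] \<Longrightarrow> a = [x1] \<and> b = [x2]"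
  by (cases a) (auto simp: append_eq_Cons_conv)

lemma conj_pattern_split:
  assumes "a @ b = Edge z # elt \<Gamma> v h @ [Edge z']" "a \<noteq> []" "b \<noteq> []"
  shows "(a = [Edge z] \<and> b = elt \<Gamma> v h @ [Edge z']) \<or> (a = Edge z # elt \<Gamma> v h \<and> b = [Edge z'])"
  using assms by (auto simp: elt_def Cons_eq_append_conv append_eq_Cons_conv)

lemma Elt_pair_infix_between_edges:
  assumes "p0 @ [Elt a g, Elt a h] @ q0 = X @ M @ Y"
    and X: "X = [] \<or> is_edge (last X)" and Y: "Y = [] \<or> is_edge (hd Y)"
  shows "(\<exists>q1. X = p0 @ [Elt a g, Elt a h] @ q1) \<or> (\<exists>p1. Y = p1 @ [Elt a g, Elt a h] @ q0)
    \<or> (\<exists>p q. M = p @ [Elt a g, Elt a h] @ q \<and> p0 = X @ p \<and> q0 = q @ Y)"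
  using assms(1)
proof (cases rule: append_eq_append_infix_cases)
  case (right p1)
  from right(1)[symmetric] show ?thesis
  proof (cases rule: append_eq_append_infix_cases)
    case (across a1 b1)
    then have "b1 = [Elt a h]" using two_letter_split by metis
    with across Y show ?thesis by simp
  qed (use right in auto)
next
  case (across a1 b1)
  then have "a1 = [Elt a g]" using two_letter_split by metis
  with across X show ?thesis by simp
qed auto

lemma conj_pattern_infix_between_edges:
  assumes "p0 @ (Edge z # elt \<Gamma> v h @ [Edge z']) @ q0 = X @ M @ Y" "edge_free M"
    and X: "X = [] \<or> is_edge (last X)" and Y: "Y = [] \<or> is_edge (hd Y)"
  shows "(\<exists>q1. X = p0 @ (Edge z # elt \<Gamma> v h @ [Edge z']) @ q1)
    \<or> (\<exists>p1. Y = p1 @ (Edge z # elt \<Gamma> v h @ [Edge z']) @ q0)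
    \<or> (X = p0 @ [Edge z] \<and> M = elt \<Gamma> v h \<and> Y = Edge z' # q0)"
  using assms(1)
proof (cases rule: append_eq_append_infix_cases)
  case (right p1)
  from right(1)[symmetric] show ?thesis
  proof (cases rule: append_eq_append_infix_cases)
    case (left q1)
    with assms(2) show ?thesis by (force simp: edge_free_def)
  next
    case (across a1 b1)
    then have "Edge z \<in> set M" by (cases a1) auto
    with assms(2) show ?thesis by (force simp: edge_free_def)
  qed (use right in auto)
next
  case (across a1 b1)
  from conj_pattern_split[OF across(1)[symmetric] across(2,3)] X across(4)
  have "a1 = [Edge z]" "b1 = elt \<Gamma> v h @ [Edge z']"
    by (auto simp: elt_def split: if_splits)
  with across edge_free_append_eq_Edge[of M Y] assms(2) Y show ?thesis
    by auto
qed auto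

lemma britton_step_append_context:
  "britton_step \<Gamma> X Z \<Longrightarrow> britton_step \<Gamma> (p @ X @ q) (p @ Z @ q)"
proof (induction rule: britton_step.induct)
  case (mult a g h p' q')
  from britton_step.mult[OF mult, of "p @ p'" "q' @ q"] show ?case by simp
next
  case (conj y c p' q')
  from britton_step.conj[OF conj, of "p @ p'" "q' @ q"] show ?case by simp
qed

lemma britton_step_mult_redex:
  assumes "a \<in> verts \<Gamma>" "g \<in> carrier (vgrp \<Gamma> a)" "h \<in> carrier (vgrp \<Gamma> a)"
    "g \<noteq> \<one>\<^bsub>vgrp \<Gamma> a\<^esub>" "h \<noteq> \<one>\<^bsub>vgrp \<Gamma> a\<^esub>"
  shows "britton_step \<Gamma> [Elt a g, Elt a h] (elt \<Gamma> a (g \<otimes>\<^bsub>vgrp \<Gamma> a\<^esub> h))"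
  using britton_step.mult[OF assms, of "[]" "[]"] by simp

lemma britton_step_conj_redex:
  assumes "z \<in> edges \<Gamma>" "c \<in> carrier (egrp \<Gamma> z)"
  shows "britton_step \<Gamma> (Edge z # elt \<Gamma> (tgt \<Gamma> z) (emb \<Gamma> (rev \<Gamma> z) c) @ [Edge (rev \<Gamma> z)])
           (elt \<Gamma> (src \<Gamma> z) (emb \<Gamma> z c))"
  using britton_step.conj[OF assms, of "[]" "[]"] by simp

lemma not_britton_reduced_infix:
  "britton_step \<Gamma> X Z \<Longrightarrow> \<not> britton_reduced \<Gamma> (p @ X @ q)"
  unfolding britton_reduced_def using britton_step_append_context by blast

lemma britton_reduced_infix:
  "britton_reduced \<Gamma> (p @ X @ q) \<Longrightarrow> britton_reduced \<Gamma> X"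
  unfolding britton_reduced_def using britton_step_append_context by blast

lemma britton_reduced_appendD:
  assumes "britton_reduced \<Gamma> (X @ Y)"
  shows "britton_reduced \<Gamma> X" "britton_reduced \<Gamma> Y"
  using britton_reduced_infix[of \<Gamma> "[]" X Y] britton_reduced_infix[of \<Gamma> X Y "[]"] assms
  by simp_all

lemma britton_step_letter_counts:
  "britton_step \<Gamma> W Z \<Longrightarrow> 2 \<le> length (filter is_edge W) \<or> 2 \<le> length (filter (Not \<circ> is_edge) W)"
  by (erule britton_step.cases) auto

lemma britton_step_across_Edge:
  assumes "britton_step \<Gamma> (X @ Y) Z" "britton_reduced \<Gamma> X" "britton_reduced \<Gamma> Y"
    and "Y \<noteq> []" "is_edge (hd Y)"
  obtains p q z c where "z \<in> edges \<Gamma>" "c \<in> carrier (egrp \<Gamma> z)"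
    "X = p @ Edge z # elt \<Gamma> (tgt \<Gamma> z) (emb \<Gamma> (rev \<Gamma> z) c)" "Y = Edge (rev \<Gamma> z) # q"
  using assms(1)
proof cases
  case (mult a g h p q)
  then have step: "britton_step \<Gamma> [Elt a g, Elt a h] (elt \<Gamma> a (g \<otimes>\<^bsub>vgrp \<Gamma> a\<^esub> h))"
    by (intro britton_step_mult_redex)
  from mult(1) have "p @ [Elt a g, Elt a h] @ q = X @ Y" by simp
  then show thesis
  proof (cases rule: append_eq_append_infix_cases)
    case (across a1 b1)
    then have "b1 = [Elt a h]" using two_letter_split by metis
    with across assms(5) show thesis by simp
  qed (use step assms(2,3) not_britton_reduced_infix in metis)+
next
  case (conj z c p q)
  let ?e = "elt \<Gamma> (tgt \<Gamma> z) (emb \<Gamma> (rev \<Gamma> z) c)"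
  have step: "britton_step \<Gamma> (Edge z # ?e @ [Edge (rev \<Gamma> z)]) (elt \<Gamma> (src \<Gamma> z) (emb \<Gamma> z c))"
    using conj(3,4) by (rule britton_step_conj_redex)
  from conj(1) have "p @ (Edge z # ?e @ [Edge (rev \<Gamma> z)]) @ q = X @ Y" by simp
  then show thesis
  proof (cases rule: append_eq_append_infix_cases)
    case (across a1 b1)
    from conj_pattern_split[OF across(1)[symmetric] across(2,3)] assms(5) across(5)
    have "a1 = Edge z # ?e" "b1 = [Edge (rev \<Gamma> z)]"
      by (auto simp: elt_def split: if_splits)
    with across conj(3,4) show thesis by (intro that) simp_all
  qed (use step assms(2,3) not_britton_reduced_infix in metis)+
qed

definition vertex_block :: "('v, 'e, 'g, 'h) gog \<Rightarrow> 'v \<Rightarrow> ('v, 'e, 'g) letter list \<Rightarrow> bool" where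
  "vertex_block \<Gamma> v M \<longleftrightarrow> (\<forall>l\<in>set M. \<exists>h. l = Elt v h \<and> h \<in> carrier (vgrp \<Gamma> v) \<and> h \<noteq> \<one>\<^bsub>vgrp \<Gamma> v\<^esub>)"

lemma vertex_block_append [simp]:
  "vertex_block \<Gamma> v (M @ N) \<longleftrightarrow> vertex_block \<Gamma> v M \<and> vertex_block \<Gamma> v N"
  by (auto simp: vertex_block_def)

lemma vertex_block_Cons [simp]:
  "vertex_block \<Gamma> v (l # M) \<longleftrightarrow>
    (\<exists>h. l = Elt v h \<and> h \<in> carrier (vgrp \<Gamma> v) \<and> h \<noteq> \<one>\<^bsub>vgrp \<Gamma> v\<^esub>) \<and> vertex_block \<Gamma> v M"
  by (simp add: vertex_block_def)

lemma vertex_block_elt: "h \<in> carrier (vgrp \<Gamma> v) \<Longrightarrow> vertex_block \<Gamma> v (elt \<Gamma> v h)"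
  by (simp add: vertex_block_def elt_def)

lemma vertex_block_edge_free: "vertex_block \<Gamma> v M \<Longrightarrow> edge_free M"
  by (auto simp: vertex_block_def edge_free_def)

lemma britton_reduced_vertex_block_length:
  assumes "v \<in> verts \<Gamma>" "vertex_block \<Gamma> v M" "britton_reduced \<Gamma> (X @ M @ Y)"
  shows "length M \<le> 1"
proof (rule ccontr)
  assume "\<not> length M \<le> 1"
  then obtain l1 l2 r where M: "M = l1 # l2 # r"
    by (cases M; cases "tl M") auto
  with assms(2) obtain h1 h2 where "l1 = Elt v h1" "l2 = Elt v h2"
    "h1 \<in> carrier (vgrp \<Gamma> v)" "h2 \<in> carrier (vgrp \<Gamma> v)"
    "h1 \<noteq> \<one>\<^bsub>vgrp \<Gamma> v\<^esub>" "h2 \<noteq> \<one>\<^bsub>vgrp \<Gamma> v\<^esub>"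
    by (auto simp: vertex_block_def)
  with assms(1) have "britton_step \<Gamma> [l1, l2] (elt \<Gamma> v (h1 \<otimes>\<^bsub>vgrp \<Gamma> v\<^esub> h2))"
    by (simp add: britton_step_mult_redex)
  with assms(3) M show False using not_britton_reduced_infix[of \<Gamma> "[l1, l2]" _ X "r @ Y"] by simp
qed

lemma britton_step_between_edges_cases:
  assumes "britton_step \<Gamma> (X @ M @ Y) Z" "britton_reduced \<Gamma> X" "britton_reduced \<Gamma> Y"
    and X: "X = [] \<or> is_edge (last X)" and Y: "Y = [] \<or> is_edge (hd Y)" and M: "edge_free M"
  obtains (mult) p q a g h where "M = p @ [Elt a g, Elt a h] @ q"
      "Z = X @ (p @ elt \<Gamma> a (g \<otimes>\<^bsub>vgrp \<Gamma> a\<^esub> h) @ q) @ Y"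
    | (conj) X' Y' z c where "z \<in> edges \<Gamma>" "c \<in> carrier (egrp \<Gamma> z)" "X = X' @ [Edge z]"
      "M = elt \<Gamma> (tgt \<Gamma> z) (emb \<Gamma> (rev \<Gamma> z) c)" "Y = Edge (rev \<Gamma> z) # Y'"
      "Z = X' @ elt \<Gamma> (src \<Gamma> z) (emb \<Gamma> z c) @ Y'"
  using assms(1)
proof cases
  case (mult a g h p0 q0)
  have "britton_step \<Gamma> [Elt a g, Elt a h] (elt \<Gamma> a (g \<otimes>\<^bsub>vgrp \<Gamma> a\<^esub> h))"
    using mult(3-7) by (rule britton_step_mult_redex)
  with Elt_pair_infix_between_edges[OF mult(1)[symmetric] X Y] assms(2,3) mult(2) that(1)
  show thesis using not_britton_reduced_infix by fastforce
next
  case (conj z c p0 q0)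
  have "britton_step \<Gamma> (Edge z # elt \<Gamma> (tgt \<Gamma> z) (emb \<Gamma> (rev \<Gamma> z) c) @ [Edge (rev \<Gamma> z)])
      (elt \<Gamma> (src \<Gamma> z) (emb \<Gamma> z c))"
    using conj(3,4) by (rule britton_step_conj_redex)
  with conj_pattern_infix_between_edges[of p0 z _ _ _ "rev \<Gamma> z" q0 X M Y] conj(1,2) M X Y
    assms(2,3) that(2)[OF conj(3,4)]
  show thesis using not_britton_reduced_infix by fastforce
qed

section \<open>Conjugacy in the fundamental group\<close>

lemma fg_eq_append_context: "fg_eq \<Gamma> u v \<Longrightarrow> fg_eq \<Gamma> (p @ u @ q) (p @ v @ q)"
proof (induction rule: fg_eq.induct)
  case (rel u v p' q')
  from fg_eq.rel[OF rel, of "p @ p'" "q' @ q"] show ?case by simp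
qed (auto intro: fg_eq.intros)

lemma fg_rel_fg_eq: "fg_rel \<Gamma> u v \<Longrightarrow> fg_eq \<Gamma> u v"
  using fg_eq.rel[of \<Gamma> u v "[]" "[]"] by simp

lemma britton_step_fg_eq: "britton_step \<Gamma> u v \<Longrightarrow> fg_eq \<Gamma> u v"
proof (induction rule: britton_step.induct)
  case (mult a g h p q)
  then have "fg_rel \<Gamma> [Elt a g, Elt a h] (elt \<Gamma> a (g \<otimes>\<^bsub>vgrp \<Gamma> a\<^esub> h))"
    using fg_rel.mult[of a \<Gamma> g h] by (simp add: elt_def)
  then show ?case using fg_eq.rel by fastforce
next
  case (conj y c p q)
  then show ?case using fg_eq.rel[OF fg_rel.conj[OF conj], of p q] by simp
qed

lemma britton_steps_fg_eq: "(britton_step \<Gamma>)\<^sup>*\<^sup>* u v \<Longrightarrow> fg_eq \<Gamma> u v"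
  by (induction rule: rtranclp_induct) (auto intro: fg_eq.intros britton_step_fg_eq)

fun inv_letter :: "('v, 'e, 'g, 'h) gog \<Rightarrow> ('v, 'e, 'g) letter \<Rightarrow> ('v, 'e, 'g) letter" where
  "inv_letter \<Gamma> (Edge e) = Edge (rev \<Gamma> e)"
| "inv_letter \<Gamma> (Elt a h) = Elt a (inv\<^bsub>vgrp \<Gamma> a\<^esub> h)"

definition inv_word :: "('v, 'e, 'g, 'h) gog \<Rightarrow> ('v, 'e, 'g) letter list \<Rightarrow> ('v, 'e, 'g) letter list" where
  "inv_word \<Gamma> u = List.rev (map (inv_letter \<Gamma>) u)"

lemma inv_letter_inverse:
  assumes "graph_of_groups \<Gamma>" "valid_letter \<Gamma> l"
  shows "fg_eq \<Gamma> [l, inv_letter \<Gamma> l] []" "fg_eq \<Gamma> [inv_letter \<Gamma> l, l] []"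
    "valid_letter \<Gamma> (inv_letter \<Gamma> l)"
proof -
  have "fg_eq \<Gamma> [l, inv_letter \<Gamma> l] [] \<and> fg_eq \<Gamma> [inv_letter \<Gamma> l, l] []
      \<and> valid_letter \<Gamma> (inv_letter \<Gamma> l)"
  proof (cases l)
    case (Edge e)
    with assms have e: "e \<in> edges \<Gamma>" "rev \<Gamma> e \<in> edges \<Gamma>" "rev \<Gamma> (rev \<Gamma> e) = e"
      by (auto simp: valid_letter_def graph_of_groups_def)
    with fg_rel.inv_edge[of e \<Gamma>] fg_rel.inv_edge[of "rev \<Gamma> e" \<Gamma>] show ?thesis
      using Edge by (auto simp: valid_letter_def intro: fg_rel_fg_eq)
  next
    case (Elt a h)
    with assms have a: "a \<in> verts \<Gamma>" "h \<in> carrier (vgrp \<Gamma> a)" "h \<noteq> \<one>\<^bsub>vgrp \<Gamma> a\<^esub>"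
      and grp: "group (vgrp \<Gamma> a)"
      by (auto simp: valid_letter_def graph_of_groups_def)
    let ?i = "inv\<^bsub>vgrp \<Gamma> a\<^esub> h"
    have i: "?i \<in> carrier (vgrp \<Gamma> a)" "?i \<noteq> \<one>\<^bsub>vgrp \<Gamma> a\<^esub>"
      "h \<otimes>\<^bsub>vgrp \<Gamma> a\<^esub> ?i = \<one>\<^bsub>vgrp \<Gamma> a\<^esub>" "?i \<otimes>\<^bsub>vgrp \<Gamma> a\<^esub> h = \<one>\<^bsub>vgrp \<Gamma> a\<^esub>"
      using a grp by (auto simp: group.inv_eq_1_iff group.r_inv group.l_inv)
    with a fg_rel.mult[OF a(1,2) i(1)] fg_rel.mult[OF a(1) i(1) a(2)] show ?thesis
      using Elt by (auto simp: valid_letter_def elt_def intro: fg_rel_fg_eq)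
  qed
  then show "fg_eq \<Gamma> [l, inv_letter \<Gamma> l] []" "fg_eq \<Gamma> [inv_letter \<Gamma> l, l] []"
    "valid_letter \<Gamma> (inv_letter \<Gamma> l)" by blast+
qed

lemma inv_word_inverse:
  assumes "graph_of_groups \<Gamma>" "valid_word \<Gamma> u"
  shows "fg_eq \<Gamma> (u @ inv_word \<Gamma> u) [] \<and> fg_eq \<Gamma> (inv_word \<Gamma> u @ u) []
    \<and> valid_word \<Gamma> (inv_word \<Gamma> u)"
  using assms(2)
proof (induction u)
  case Nil
  then show ?case by (simp add: inv_word_def valid_word_def fg_eq.refl)
next
  case (Cons l u)
  then have l: "valid_letter \<Gamma> l" and IH: "fg_eq \<Gamma> (u @ inv_word \<Gamma> u) []"
    "fg_eq \<Gamma> (inv_word \<Gamma> u @ u) []" "valid_word \<Gamma> (inv_word \<Gamma> u)"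
    by (auto simp: valid_word_def)
  note inv_l = inv_letter_inverse[OF assms(1) l]
  have inv: "inv_word \<Gamma> (l # u) = inv_word \<Gamma> u @ [inv_letter \<Gamma> l]"
    by (simp add: inv_word_def)
  have "fg_eq \<Gamma> (l # u @ inv_word \<Gamma> u @ [inv_letter \<Gamma> l]) [l, inv_letter \<Gamma> l]"
    using fg_eq_append_context[OF IH(1), of "[l]" "[inv_letter \<Gamma> l]"] by simp
  moreover have "fg_eq \<Gamma> (inv_word \<Gamma> u @ [inv_letter \<Gamma> l, l] @ u) (inv_word \<Gamma> u @ u)"
    using fg_eq_append_context[OF inv_l(2)] by fastforce
  ultimately show ?case
    using inv inv_l IH by (auto simp: valid_word_def intro: fg_eq.trans)
qed

lemma fg_conjugate_rotate:
  assumes "graph_of_groups \<Gamma>" "valid_word \<Gamma> Q" "fg_eq \<Gamma> (Q @ P) W"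
  shows "fg_conjugate \<Gamma> (P @ Q) W"
proof -
  note Q_inv = inv_word_inverse[OF assms(1,2)]
  have "fg_eq \<Gamma> ((Q @ P) @ (Q @ inv_word \<Gamma> Q) @ []) ((Q @ P) @ [] @ [])"
    using Q_inv fg_eq_append_context by blast
  then have "fg_eq \<Gamma> (Q @ (P @ Q) @ inv_word \<Gamma> Q) W"
    using assms(3) by (auto intro: fg_eq.trans)
  with assms(2) Q_inv show ?thesis unfolding fg_conjugate_def by blast
qed

section \<open>Reducing the rotated factorization\<close>

lemma graph_of_groups_edge_verts:
  assumes "graph_of_groups \<Gamma>" "z \<in> edges \<Gamma>"
  shows "src \<Gamma> z \<in> verts \<Gamma>" "tgt \<Gamma> z \<in> verts \<Gamma>"
  using assms by (auto simp: graph_of_groups_def)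

lemma graph_of_groups_tgt_rev:
  assumes "graph_of_groups \<Gamma>" "z \<in> edges \<Gamma>"
  shows "tgt \<Gamma> (rev \<Gamma> z) = src \<Gamma> z"
proof -
  from assms have "rev \<Gamma> z \<in> edges \<Gamma>" "rev \<Gamma> (rev \<Gamma> z) = z"
    by (auto simp: graph_of_groups_def)
  with assms(1) show ?thesis by (auto simp: graph_of_groups_def)
qed

lemma graph_of_groups_emb_in_carrier:
  assumes "graph_of_groups \<Gamma>" "z \<in> edges \<Gamma>" "c \<in> carrier (egrp \<Gamma> z)"
  shows "emb \<Gamma> z c \<in> carrier (vgrp \<Gamma> (src \<Gamma> z))"
  using assms by (auto simp: graph_of_groups_def intro: hom_in_carrier)

lemma seg_word_empty: "j < i \<Longrightarrow> seg_word \<Gamma> y g i j = []"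
  by (simp add: seg_word_def)

lemma seg_word_Cons:
  assumes "i \<le> j"
  shows "seg_word \<Gamma> y g i j = Edge (y i) # elt \<Gamma> (tgt \<Gamma> (y i)) (g i) @ seg_word \<Gamma> y g (Suc i) j"
proof -
  from assms have "[i..<Suc j] = i # [Suc i..<Suc j]" by (simp add: upt_conv_Cons)
  then show ?thesis by (simp add: seg_word_def)
qed

lemma seg_word_snoc:
  "i \<le> Suc j \<Longrightarrow>
    seg_word \<Gamma> y g i (Suc j) = seg_word \<Gamma> y g i j @ Edge (y (Suc j)) # elt \<Gamma> (tgt \<Gamma> (y (Suc j))) (g (Suc j))"
  by (simp add: seg_word_def)

lemma seg_word_append:
  assumes "i \<le> Suc k" "k \<le> j"
  shows "seg_word \<Gamma> y g i j = seg_word \<Gamma> y g i k @ seg_word \<Gamma> y g (Suc k) j"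
proof -
  have "[i..<Suc j] = [i..<Suc k] @ [Suc k..<Suc j]"
    using assms upt_add_eq_append[of i "Suc k" "j - k"] by simp
  then show ?thesis by (simp add: seg_word_def)
qed

lemma cyc_britton_reduced_if_few_letters:
  assumes "length (filter is_edge W) \<le> 1" "length (filter (Not \<circ> is_edge) W) \<le> 1"
  shows "cyc_britton_reduced \<Gamma> W"
  unfolding cyc_britton_reduced_def britton_reduced_def
proof (intro allI impI notI)
  fix u u' assume "W = u @ u'" "\<exists>Z. britton_step \<Gamma> (u' @ u) Z"
  with assms show False using britton_step_letter_counts[of \<Gamma> "u' @ u"] by auto
qed

locale britton_reduced_factorization =
  fixes \<Gamma> :: "('v, 'e, 'g, 'h) gog" and n :: nat and y :: "nat \<Rightarrow> 'e" and g :: "nat \<Rightarrow> 'g"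
  assumes graph: "graph_of_groups \<Gamma>"
    and factorization: "is_factorization \<Gamma> n y g"
    and reduced: "britton_reduced \<Gamma> (fact_word \<Gamma> n y g)"
begin

abbreviation m :: nat where "m \<equiv> n div 2"
abbreviation seg :: "nat \<Rightarrow> nat \<Rightarrow> ('v, 'e, 'g) letter list" where "seg \<equiv> seg_word \<Gamma> y g"

lemma n_bounds: "1 \<le> n" "m + 1 \<le> n" "m \<le> n - m" "n - m \<le> m + 1"
  using factorization by (auto simp: is_factorization_def)

lemma y_in_edges: "1 \<le> i \<Longrightarrow> i \<le> n \<Longrightarrow> y i \<in> edges \<Gamma>"
  using factorization by (auto simp: is_factorization_def)

lemma tgt_y_eq_src_y_Suc: "1 \<le> i \<Longrightarrow> i < n \<Longrightarrow> tgt \<Gamma> (y i) = src \<Gamma> (y (Suc i))"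
  using factorization by (auto simp: is_factorization_def)

lemma g_in_carrier: "1 \<le> i \<Longrightarrow> i \<le> n \<Longrightarrow> g i \<in> carrier (vgrp \<Gamma> (tgt \<Gamma> (y i)))"
  using factorization by (auto simp: is_factorization_def)

lemma factorization_wraps_around: "tgt \<Gamma> (y n) = src \<Gamma> (y 1)" "g 0 \<in> carrier (vgrp \<Gamma> (src \<Gamma> (y 1)))"
  using factorization by (auto simp: is_factorization_def)

lemma fact_word_halves: "fact_word \<Gamma> n y g = elt \<Gamma> (src \<Gamma> (y 1)) (g 0) @ seg 1 m @ seg (m + 1) n"
  using seg_word_append[of 1 m n \<Gamma> y g] n_bounds by (simp add: fact_word_def)

lemma valid_word_seg: "1 \<le> i \<Longrightarrow> j \<le> n \<Longrightarrow> valid_word \<Gamma> (seg i j)"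
  using y_in_edges g_in_carrier graph_of_groups_edge_verts[OF graph]
  by (fastforce simp: seg_word_def valid_word_def valid_letter_def elt_def split: if_splits)

text \<open>\<open>left_rest k\<close> = y_(m+1) g_(m+1) ... g_(n-k-1) y_(n-k) and
  \<open>right_rest k\<close> = y_(k+1) g_(k+1) ... y_m g_m are what remains of Q and P around the middle
  block after k edge cancellations.\<close>
definition left_rest :: "nat \<Rightarrow> ('v, 'e, 'g) letter list" where
  "left_rest k = (if m + 1 \<le> n - k then seg (m + 1) (n - k - 1) @ [Edge (y (n - k))] else [])"

definition right_rest :: "nat \<Rightarrow> ('v, 'e, 'g) letter list" where
  "right_rest k = seg (Suc k) m"

definition rest_shape :: "('v, 'e, 'g) letter list \<Rightarrow> bool" where
  "rest_shape W \<longleftrightarrow> (\<exists>k v M. k \<le> m \<and> v \<in> verts \<Gamma> \<and> vertex_block \<Gamma> v M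
     \<and> W = left_rest k @ M @ right_rest k)"

lemma left_rest_reduced: "britton_reduced \<Gamma> (left_rest k)"
proof (cases "m + 1 \<le> n - k")
  case True
  have "seg (m + 1) n = seg (m + 1) (n - k - 1) @ seg (n - k) n"
    using True seg_word_append[of "m + 1" "n - k - 1" n] by (simp add: Suc_diff_Suc)
  also have "seg (n - k) n = Edge (y (n - k)) # elt \<Gamma> (tgt \<Gamma> (y (n - k))) (g (n - k)) @ seg (Suc (n - k)) n"
    by (rule seg_word_Cons) simp
  finally have "fact_word \<Gamma> n y g = (elt \<Gamma> (src \<Gamma> (y 1)) (g 0) @ seg 1 m) @ left_rest k
      @ elt \<Gamma> (tgt \<Gamma> (y (n - k))) (g (n - k)) @ seg (Suc (n - k)) n"
    using True by (simp add: fact_word_halves left_rest_def)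
  with reduced show ?thesis by (metis britton_reduced_infix)
next
  case False
  then show ?thesis
    by (auto simp: left_rest_def britton_reduced_def elim: britton_step.cases)
qed

lemma right_rest_reduced:
  assumes "k \<le> m"
  shows "britton_reduced \<Gamma> (right_rest k)"
proof -
  have "fact_word \<Gamma> n y g = (elt \<Gamma> (src \<Gamma> (y 1)) (g 0) @ seg 1 k) @ right_rest k @ seg (m + 1) n"
    using assms seg_word_append[of 1 k m] by (simp add: fact_word_halves right_rest_def)
  with reduced show ?thesis by (metis britton_reduced_infix)
qed

lemma left_rest_last: "left_rest k = [] \<or> is_edge (last (left_rest k))"
  by (simp add: left_rest_def)

lemma right_rest_hd: "right_rest k = [] \<or> is_edge (hd (right_rest k))"
  by (cases "Suc k \<le> m") (simp_all add: right_rest_def seg_word_Cons seg_word_empty)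

lemma right_rest_Suc:
  assumes "k < m"
  shows "right_rest k = Edge (y (Suc k)) # elt \<Gamma> (tgt \<Gamma> (y (Suc k))) (g (Suc k)) @ right_rest (Suc k)"
  using assms seg_word_Cons[of "Suc k" m] by (simp add: right_rest_def)

lemma left_rest_Suc:
  assumes "k < m"
  obtains h where "h \<in> carrier (vgrp \<Gamma> (src \<Gamma> (y (n - k))))"
    "left_rest k = left_rest (Suc k) @ elt \<Gamma> (src \<Gamma> (y (n - k))) h @ [Edge (y (n - k))]"
proof (cases "m + 1 \<le> n - k - 1")
  case True
  define j where "j = n - k - 1"
  have j: "1 \<le> j" "j < n" "Suc j = n - k" "n - Suc k = j" "m + 1 \<le> j" "m + 1 \<le> n - k"
    using True assms n_bounds unfolding j_def by linarith+
  then obtain i where i: "j = Suc i" "m + 1 \<le> Suc i"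
    by (cases j) auto
  have "left_rest k = seg (m + 1) i @ Edge (y j) # elt \<Gamma> (tgt \<Gamma> (y j)) (g j) @ [Edge (y (n - k))]"
    using j(6) seg_word_snoc[OF i(2)] i(1) unfolding left_rest_def j_def[symmetric] by simp
  moreover have "left_rest (Suc k) = seg (m + 1) i @ [Edge (y j)]"
    using j i seg_word_snoc[OF i(2)] unfolding left_rest_def by simp
  moreover have "tgt \<Gamma> (y j) = src \<Gamma> (y (n - k))"
    using tgt_y_eq_src_y_Suc[OF j(1,2)] j(3) by simp
  ultimately show thesis
    using that[of "g j"] g_in_carrier[of j] j by simp
next
  case False
  have "m + 1 \<le> n - k"
    using assms n_bounds by linarith
  then have "y (n - k) \<in> edges \<Gamma>"
    by (intro y_in_edges) simp_all
  then have "group (vgrp \<Gamma> (src \<Gamma> (y (n - k))))"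
    using graph graph_of_groups_edge_verts by (auto simp: graph_of_groups_def)
  with False \<open>m + 1 \<le> n - k\<close> show thesis
    using that[of "\<one>\<^bsub>vgrp \<Gamma> (src \<Gamma> (y (n - k)))\<^esub>"]
    by (simp add: left_rest_def seg_word_empty elt_def group.is_monoid monoid.one_closed)
qed

lemma rest_shape_step:
  assumes "rest_shape W" "britton_step \<Gamma> W Z"
  shows "rest_shape Z"
proof -
  obtain k v M where k: "k \<le> m" and v: "v \<in> verts \<Gamma>" "vertex_block \<Gamma> v M"
    and W: "W = left_rest k @ M @ right_rest k"
    using assms(1) unfolding rest_shape_def by blast
  from assms(2)[unfolded W] left_rest_reduced right_rest_reduced[OF k] left_rest_last right_rest_hd
    vertex_block_edge_free[OF v(2)]
  show ?thesis
  proof (cases rule: britton_step_between_edges_cases)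
    case (mult p q a g1 g2)
    with v(2) have "a = v" "g1 \<in> carrier (vgrp \<Gamma> v)" "g2 \<in> carrier (vgrp \<Gamma> v)"
      by (auto simp: vertex_block_def)
    with v have "vertex_block \<Gamma> v (p @ elt \<Gamma> a (g1 \<otimes>\<^bsub>vgrp \<Gamma> a\<^esub> g2) @ q)"
      using mult(1) graph by (auto simp: graph_of_groups_def intro!: vertex_block_elt monoid.m_closed group.is_monoid)
    with k v(1) mult(2) show ?thesis unfolding rest_shape_def by blast
  next
    case (conj X' Y' z c)
    have "k < m"
      using conj(5) k by (cases "k = m") (simp_all add: right_rest_def seg_word_empty)
    then obtain h where h: "h \<in> carrier (vgrp \<Gamma> (src \<Gamma> (y (n - k))))"
      "left_rest k = left_rest (Suc k) @ elt \<Gamma> (src \<Gamma> (y (n - k))) h @ [Edge (y (n - k))]"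
      by (rule left_rest_Suc)
    with conj(3) have z: "z = y (n - k)" "X' = left_rest (Suc k) @ elt \<Gamma> (src \<Gamma> z) h" by auto
    from conj(5) right_rest_Suc[OF \<open>k < m\<close>]
    have rz: "rev \<Gamma> z = y (Suc k)" "Y' = elt \<Gamma> (src \<Gamma> z) (g (Suc k)) @ right_rest (Suc k)"
      using graph_of_groups_tgt_rev[OF graph conj(1)] by auto
    have "g (Suc k) \<in> carrier (vgrp \<Gamma> (src \<Gamma> z))"
      using g_in_carrier[of "Suc k"] \<open>k < m\<close> n_bounds graph_of_groups_tgt_rev[OF graph conj(1)] rz(1)
      by simp
    then have "vertex_block \<Gamma> (src \<Gamma> z) (elt \<Gamma> (src \<Gamma> z) h @ elt \<Gamma> (src \<Gamma> z) (emb \<Gamma> z c)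
        @ elt \<Gamma> (src \<Gamma> z) (g (Suc k)))"
      using h(1) z(1) graph_of_groups_emb_in_carrier[OF graph conj(1,2)] by (simp add: vertex_block_elt)
    moreover have "src \<Gamma> z \<in> verts \<Gamma>"
      using graph_of_groups_edge_verts[OF graph conj(1)] by simp
    ultimately show ?thesis
      using conj(6) z rz \<open>k < m\<close> unfolding rest_shape_def
      by (intro exI[of _ "Suc k"] exI[of _ "src \<Gamma> z"]) auto
  qed
qed

lemma rest_shape_steps: "(britton_step \<Gamma>)\<^sup>*\<^sup>* W Z \<Longrightarrow> rest_shape W \<Longrightarrow> rest_shape Z"
  by (induction rule: rtranclp_induct) (auto intro: rest_shape_step)

lemma rest_shape_rotation: "rest_shape (seg (m + 1) n @ elt \<Gamma> (src \<Gamma> (y 1)) (g 0) @ seg 1 m)"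
proof -
  have "seg (m + 1) n = seg (m + 1) (n - 1) @ Edge (y n) # elt \<Gamma> (tgt \<Gamma> (y n)) (g n)"
    using seg_word_snoc[of "m + 1" "n - 1" \<Gamma> y g] n_bounds by simp
  then have "seg (m + 1) n = left_rest 0 @ elt \<Gamma> (src \<Gamma> (y 1)) (g n)"
    using n_bounds factorization_wraps_around(1) by (simp add: left_rest_def)
  moreover have "src \<Gamma> (y 1) \<in> verts \<Gamma>"
    using graph_of_groups_edge_verts[OF graph y_in_edges[of 1]] n_bounds by simp
  moreover have "vertex_block \<Gamma> (src \<Gamma> (y 1)) (elt \<Gamma> (src \<Gamma> (y 1)) (g n) @ elt \<Gamma> (src \<Gamma> (y 1)) (g 0))"
    using g_in_carrier[of n] n_bounds factorization_wraps_around by (simp add: vertex_block_elt)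
  ultimately show ?thesis
    unfolding rest_shape_def right_rest_def
    by (intro exI[of _ 0] exI[of _ "src \<Gamma> (y 1)"]) auto
qed

lemma fact_word_middle:
  assumes "1 \<le> m"
  obtains P Q where
    "fact_word \<Gamma> n y g = P @ Edge (y m) # elt \<Gamma> (tgt \<Gamma> (y m)) (g m) @ Edge (y (Suc m)) # Q"
proof -
  have "seg 1 m = seg 1 (m - 1) @ Edge (y m) # elt \<Gamma> (tgt \<Gamma> (y m)) (g m)"
    using assms seg_word_snoc[of 1 "m - 1" \<Gamma> y g] by simp
  moreover have "seg (m + 1) n = Edge (y (Suc m)) # elt \<Gamma> (tgt \<Gamma> (y (Suc m))) (g (Suc m)) @ seg (Suc (Suc m)) n"
    using n_bounds seg_word_Cons[of "m + 1" n] by simp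
  ultimately have "fact_word \<Gamma> n y g = (elt \<Gamma> (src \<Gamma> (y 1)) (g 0) @ seg 1 (m - 1))
      @ Edge (y m) # elt \<Gamma> (tgt \<Gamma> (y m)) (g m) @ Edge (y (Suc m))
      # (elt \<Gamma> (tgt \<Gamma> (y (Suc m))) (g (Suc m)) @ seg (Suc (Suc m)) n)"
    using fact_word_halves by simp
  then show thesis by (rule that)
qed

lemma left_rest_hd:
  assumes "k < m"
  obtains r where "left_rest k = Edge (y (Suc m)) # r"
proof -
  have "m + 1 \<le> n - k"
    using assms n_bounds by linarith
  then have L: "left_rest k = seg (m + 1) (n - k - 1) @ [Edge (y (n - k))]"
    by (simp add: left_rest_def)
  show thesis
  proof (cases "m + 1 \<le> n - k - 1")
    case True
    with L seg_word_Cons[OF True, of \<Gamma> y g] show thesis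
      using that by simp
  next
    case False
    with assms n_bounds have "n - k = Suc m" "n - k - 1 < m + 1" by linarith+
    with L show thesis
      using that by (simp add: seg_word_empty)
  qed
qed

lemma right_rest_last:
  assumes "k < m"
  obtains s where "right_rest k = s @ Edge (y m) # elt \<Gamma> (tgt \<Gamma> (y m)) (g m)"
  using assms seg_word_snoc[of "Suc k" "m - 1" \<Gamma> y g] that by (simp add: right_rest_def)

lemma left_rest_middle: "left_rest m = [] \<or> left_rest m = [Edge (y (n - m))]"
  using n_bounds by (simp add: left_rest_def seg_word_empty)

lemma cyc_britton_reduced_between_halves:
  assumes "britton_reduced \<Gamma> W" "1 \<le> m"
    and "W = Edge (y (Suc m)) # r" "W = s @ Edge (y m) # elt \<Gamma> (tgt \<Gamma> (y m)) (g m)"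
  shows "cyc_britton_reduced \<Gamma> W"
  unfolding cyc_britton_reduced_def
proof (intro allI impI)
  fix u u' assume W: "W = u @ u'"
  show "britton_reduced \<Gamma> (u' @ u)"
  proof (cases "u = []")
    case True
    with W assms(1) show ?thesis by simp
  next
    case False
    have u: "hd u = Edge (y (Suc m))"
      using False W assms(3) by (cases u) auto
    show ?thesis
      unfolding britton_reduced_def
    proof
      assume "\<exists>Z. britton_step \<Gamma> (u' @ u) Z"
      then obtain Z where "britton_step \<Gamma> (u' @ u) Z" by blast
      moreover note britton_reduced_appendD[OF assms(1)[unfolded W]]
      moreover have "is_edge (hd u)" using u by simp
      ultimately obtain p q z c where z: "z \<in> edges \<Gamma>" "c \<in> carrier (egrp \<Gamma> z)"
        and u': "u' = p @ Edge z # elt \<Gamma> (tgt \<Gamma> z) (emb \<Gamma> (rev \<Gamma> z) c)"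
        and u_eq: "u = Edge (rev \<Gamma> z) # q"
        using False by (elim britton_step_across_Edge)
      from u u_eq have rz: "rev \<Gamma> z = y (Suc m)" by simp
      have "(u @ p) @ Edge z # elt \<Gamma> (tgt \<Gamma> z) (emb \<Gamma> (rev \<Gamma> z) c)
          = s @ Edge (y m) # elt \<Gamma> (tgt \<Gamma> (y m)) (g m)"
        using W u' assms(4) by simp
      then have "z = y m" "elt \<Gamma> (tgt \<Gamma> z) (emb \<Gamma> (rev \<Gamma> z) c) = elt \<Gamma> (tgt \<Gamma> (y m)) (g m)"
        using append_Edge_edge_free_eq[of "u @ p" z _ s "y m"] by simp_all
      moreover obtain P Q where
        "fact_word \<Gamma> n y g = P @ Edge (y m) # elt \<Gamma> (tgt \<Gamma> (y m)) (g m) @ Edge (y (Suc m)) # Q"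
        using fact_word_middle[OF assms(2)] .
      ultimately have "fact_word \<Gamma> n y g
          = P @ (Edge z # elt \<Gamma> (tgt \<Gamma> z) (emb \<Gamma> (rev \<Gamma> z) c) @ [Edge (rev \<Gamma> z)]) @ Q"
        using rz by simp
      with reduced britton_step_conj_redex[OF z] show False
        using not_britton_reduced_infix by metis
    qed
  qed
qed

lemma cyc_britton_reduced_rest_shape:
  assumes "rest_shape W" "britton_reduced \<Gamma> W"
  shows "cyc_britton_reduced \<Gamma> W"
proof -
  obtain k v M where k: "k \<le> m" and v: "v \<in> verts \<Gamma>" "vertex_block \<Gamma> v M"
    and W: "W = left_rest k @ M @ right_rest k"
    using assms(1) unfolding rest_shape_def by blast
  have M: "length M \<le> 1" "edge_free M"
    using britton_reduced_vertex_block_length[OF v] assms(2) W vertex_block_edge_free[OF v(2)]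
    by simp_all
  show ?thesis
  proof (cases "k = m")
    case True
    then have "W = left_rest m @ M"
      using W by (simp add: right_rest_def seg_word_empty)
    moreover have "filter is_edge M = []" "length (filter (Not \<circ> is_edge) M) \<le> 1"
      using M by (auto simp: edge_free_def filter_empty_conv intro: le_trans[OF length_filter_le])
    ultimately show ?thesis
      using left_rest_middle by (intro cyc_britton_reduced_if_few_letters) auto
  next
    case False
    with k have "k < m" by simp
    obtain r where "left_rest k = Edge (y (Suc m)) # r"
      using \<open>k < m\<close> by (rule left_rest_hd)
    moreover obtain s where "right_rest k = s @ Edge (y m) # elt \<Gamma> (tgt \<Gamma> (y m)) (g m)"
      using \<open>k < m\<close> by (rule right_rest_last)
    ultimately show ?thesis
      using assms(2) W \<open>k < m\<close> by (intro cyc_britton_reduced_between_halves) auto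
  qed
qed

end

theorem lemma4p2:
  fixes \<Gamma> :: "('v, 'e, 'g, 'h) gog" and n :: nat and y :: "nat \<Rightarrow> 'e" and g :: "nat \<Rightarrow> 'g"
    and w_hat :: "('v, 'e, 'g) letter list"
  assumes "graph_of_groups \<Gamma>"
    and "is_factorization \<Gamma> n y g"
    and "n \<ge> 1"
    and "britton_reduced \<Gamma> (fact_word \<Gamma> n y g)"
    and "(britton_step \<Gamma>)\<^sup>*\<^sup>*
           (seg_word \<Gamma> y g (n div 2 + 1) n @ elt \<Gamma> (src \<Gamma> (y 1)) (g 0) @ seg_word \<Gamma> y g 1 (n div 2))
           w_hat"
    and "britton_reduced \<Gamma> w_hat"
  shows "cyc_britton_reduced \<Gamma> w_hat \<and> fg_conjugate \<Gamma> (fact_word \<Gamma> n y g) w_hat"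
proof
  interpret britton_reduced_factorization \<Gamma> n y g
    using assms(1,2,4) by unfold_locales
  show "cyc_britton_reduced \<Gamma> w_hat"
    using cyc_britton_reduced_rest_shape rest_shape_steps[OF assms(5) rest_shape_rotation] assms(6) .
  show "fg_conjugate \<Gamma> (fact_word \<Gamma> n y g) w_hat"
    unfolding fact_word_halves append_assoc[symmetric]
    using fg_conjugate_rotate[OF assms(1) valid_word_seg britton_steps_fg_eq[OF assms(5)]] n_bounds
    by simp
qed

end
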